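(* Let $\Omega\subset\mathbb{C}$ be a domain and let $H$ be a continuous, nowhere-vanishing function of $(\mu,\mathcal{A},\mathcal{B})\in\mathbb{D}\times\mathbb{C}\times\mathbb{C}$ (where $\mathbb{D}$ is the open unit disk). For $D=(\mu,\mathcal{A},\mathcal{B},\mathcal{F})\in\mathcal{BV}(\Omega)$ set $\Theta_{F,D}:=\frac{|\mathcal{F}|^2}{H(\mu,\mathcal{A},\mathcal{B})}\,dx\,dy$. Then $\Theta_F$ is not gauge-invariant: there is no such $H$ for which $\Theta_{F,\phi\cdot D}=\Theta_{F,D}$ holds for all gauges $\phi$ on $\Omega$ and all $D\in\mathcal{BV}(\Omega)$ with $\mathcal{F}\not\equiv0$.
   Context: $\mathcal{BV}(\Omega)$ is the set of quadruples $(\mu,\mathcal{A},\mathcal{B},\mathcal{F})$ of continuous complex functions on the domain $\Omega$ with $|\mu|<1$ pointwise (encoding $w_{\bar z}-\mu w_z+\mathcal{A}w+\mathcal{B}\bar w=\mathcal{F}$). A gauge is a $C^1$ nowhere-vanishing complex function $\phi$ on $\Omega$, acting by $\phi\cdot(\mu,\mathcal{A},\mathcal{B},\mathcal{F})=(\mu,\ \mathcal{A}-\phi_{\bar z}/\phi+\mu\phi_z/\phi,\ \mathcal{B}\phi/\bar\phi,\ \phi\mathcal{F})$. *)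

theory Defs
  imports "HOL-Analysis.Analysis"
begin

definition wirt_z :: "(complex \<Rightarrow> complex) \<Rightarrow> complex \<Rightarrow> complex" where
  "wirt_z f z = (frechet_derivative f (at z) 1 - \<i> * frechet_derivative f (at z) \<i>) / 2"

definition wirt_zbar :: "(complex \<Rightarrow> complex) \<Rightarrow> complex \<Rightarrow> complex" where
  "wirt_zbar f z = (frechet_derivative f (at z) 1 + \<i> * frechet_derivative f (at z) \<i>) / 2"

definition domain :: "complex set \<Rightarrow> bool" where
  "domain \<Omega> \<longleftrightarrow> open \<Omega> \<and> connected \<Omega> \<and> \<Omega> \<noteq> {}"

definition C1_on :: "complex set \<Rightarrow> (complex \<Rightarrow> complex) \<Rightarrow> bool" where
  "C1_on \<Omega> f \<longleftrightarrow> (\<forall>z\<in>\<Omega>. f differentiable (at z))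
     \<and> continuous_on \<Omega> (\<lambda>z. frechet_derivative f (at z) 1)
     \<and> continuous_on \<Omega> (\<lambda>z. frechet_derivative f (at z) \<i>)"

definition gauge :: "complex set \<Rightarrow> (complex \<Rightarrow> complex) \<Rightarrow> bool" where
  "gauge \<Omega> \<phi> \<longleftrightarrow> C1_on \<Omega> \<phi> \<and> (\<forall>z\<in>\<Omega>. \<phi> z \<noteq> 0)"

type_synonym bvdata =
  "(complex \<Rightarrow> complex) \<times> (complex \<Rightarrow> complex) \<times> (complex \<Rightarrow> complex) \<times> (complex \<Rightarrow> complex)"

definition BV :: "complex set \<Rightarrow> bvdata \<Rightarrow> bool" where
  "BV \<Omega> D \<longleftrightarrow> (case D of (\<mu>, A, B, F) \<Rightarrow>
      continuous_on \<Omega> \<mu> \<and> continuous_on \<Omega> A \<and> continuous_on \<Omega> B \<and> continuous_on \<Omega> F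
      \<and> (\<forall>z\<in>\<Omega>. cmod (\<mu> z) < 1))"

definition gauge_act :: "(complex \<Rightarrow> complex) \<Rightarrow> bvdata \<Rightarrow> bvdata" where
  "gauge_act \<phi> D = (case D of (\<mu>, A, B, F) \<Rightarrow>
     (\<mu>,
      (\<lambda>z. A z - wirt_zbar \<phi> z / \<phi> z + \<mu> z * wirt_z \<phi> z / \<phi> z),
      (\<lambda>z. B z * \<phi> z / cnj (\<phi> z)),
      (\<lambda>z. \<phi> z * F z)))"

text \<open>Density (coefficient of dx dy) of \<Theta>_{F,D} = |F|^2 / H(mu,A,B) dx dy.\<close>
definition Theta_F :: "(complex \<times> complex \<times> complex \<Rightarrow> complex) \<Rightarrow> bvdata \<Rightarrow> complex \<Rightarrow> complex" where
  "Theta_F H D z = (case D of (\<mu>, A, B, F) \<Rightarrow>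
     complex_of_real ((cmod (F z))\<^sup>2) / H (\<mu> z, A z, B z))"

end

theory Submission
  imports Defs
begin

text \<open>A nonzero real constant \<open>r\<close> is a gauge whose action fixes \<open>\<mu>\<close>, \<open>\<A>\<close> and \<open>\<B>\<close> (its Wirtinger
  derivatives vanish and \<open>r / cnj r = 1\<close>) and multiplies \<open>\<F>\<close> by \<open>r\<close>. Hence it multiplies the
  density of \<open>\<Theta>\<^sub>F\<close> by \<open>r\<^sup>2\<close>, which for \<open>r = 2\<close> is impossible wherever the density is nonzero,
  e.g. for the data \<open>(0, 0, 0, 1)\<close>.\<close>

lemma wirt_z_const [simp]: "wirt_z (\<lambda>_. c) z = 0"
  by (simp add: wirt_z_def)

lemma wirt_zbar_const [simp]: "wirt_zbar (\<lambda>_. c) z = 0"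
  by (simp add: wirt_zbar_def)

lemma gauge_const: "c \<noteq> 0 \<Longrightarrow> gauge \<Omega> (\<lambda>_. c)"
  by (simp add: gauge_def C1_on_def)

lemma gauge_act_const_real:
  assumes "r \<noteq> 0"
  shows "gauge_act (\<lambda>_. complex_of_real r) (\<mu>, A, B, F) = (\<mu>, A, B, \<lambda>z. of_real r * F z)"
  using assms by (simp add: gauge_act_def)

lemma Theta_F_gauge_act_const_real:
  assumes "r \<noteq> 0"
  shows "Theta_F H (gauge_act (\<lambda>_. complex_of_real r) D) z = of_real (r\<^sup>2) * Theta_F H D z"
proof -
  obtain \<mu> A B F where D: "D = (\<mu>, A, B, F)"
    by (metis prod.exhaust)
  show ?thesis
    using assms
    by (simp add: D gauge_act_const_real Theta_F_def norm_mult power_mult_distrib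
        flip: of_real_power)
qed

lemma BV_const_data: "cmod m < 1 \<Longrightarrow> BV \<Omega> (\<lambda>_. m, \<lambda>_. a, \<lambda>_. b, \<lambda>_. f)"
  by (simp add: BV_def)

theorem lemma8p4:
  fixes \<Omega> :: "complex set"
  assumes "domain \<Omega>"
  shows "\<not> (\<exists>H :: complex \<times> complex \<times> complex \<Rightarrow> complex.
            continuous_on (ball 0 1 \<times> UNIV \<times> UNIV) H
          \<and> (\<forall>p \<in> ball 0 1 \<times> UNIV \<times> UNIV. H p \<noteq> 0)
          \<and> (\<forall>\<phi> D. gauge \<Omega> \<phi> \<and> BV \<Omega> D \<and> (\<exists>z\<in>\<Omega>. snd (snd (snd D)) z \<noteq> 0)
                \<longrightarrow> (\<forall>z\<in>\<Omega>. Theta_F H (gauge_act \<phi> D) z = Theta_F H D z)))"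
proof
  assume "\<exists>H :: complex \<times> complex \<times> complex \<Rightarrow> complex.
            continuous_on (ball 0 1 \<times> UNIV \<times> UNIV) H
          \<and> (\<forall>p \<in> ball 0 1 \<times> UNIV \<times> UNIV. H p \<noteq> 0)
          \<and> (\<forall>\<phi> D. gauge \<Omega> \<phi> \<and> BV \<Omega> D \<and> (\<exists>z\<in>\<Omega>. snd (snd (snd D)) z \<noteq> 0)
                \<longrightarrow> (\<forall>z\<in>\<Omega>. Theta_F H (gauge_act \<phi> D) z = Theta_F H D z))"
  then obtain H :: "complex \<times> complex \<times> complex \<Rightarrow> complex" where
    H_nonzero: "\<forall>p \<in> ball 0 1 \<times> UNIV \<times> UNIV. H p \<noteq> 0" and
    invariant: "\<forall>\<phi> D. gauge \<Omega> \<phi> \<and> BV \<Omega> D \<and> (\<exists>z\<in>\<Omega>. snd (snd (snd D)) z \<noteq> 0)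
                \<longrightarrow> (\<forall>z\<in>\<Omega>. Theta_F H (gauge_act \<phi> D) z = Theta_F H D z)"
    by blast
  from assms obtain z where "z \<in> \<Omega>"
    unfolding domain_def by blast
  define D :: bvdata where "D = (\<lambda>_. 0, \<lambda>_. 0, \<lambda>_. 0, \<lambda>_. 1)"
  have "Theta_F H (gauge_act (\<lambda>_. complex_of_real 2) D) z = Theta_F H D z"
  proof -
    have "gauge \<Omega> (\<lambda>_. complex_of_real 2)" "BV \<Omega> D" "snd (snd (snd D)) z \<noteq> 0"
      by (simp_all add: gauge_const BV_const_data D_def)
    then show ?thesis
      using invariant \<open>z \<in> \<Omega>\<close> by blast
  qed
  then have "4 * Theta_F H D z = Theta_F H D z"
    using Theta_F_gauge_act_const_real[of 2 H D z] by simp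
  moreover have "Theta_F H D z \<noteq> 0"
    using H_nonzero by (simp add: D_def Theta_F_def)
  ultimately show False
    by simp
qed

end
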